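(* Let $\psi:\mathbb{R}\to\mathbb{R}$ be of class $\mathcal{C}^1$ such that $\psi'(t)\to-\infty$ as $t\to-\infty$, $\psi'(t)\to+\infty$ as $t\to+\infty$, and $\psi'$ has only finitely many local extrema. Then there exist $0<\theta_0<\theta_1<\pi$ such that for every $\theta\in(0,\pi)\setminus(\theta_0,\theta_1)$, the function $\chi(t)=\psi(t)\sin\theta+t\cos\theta$ satisfies $\chi(t)\to+\infty$ as $t\to\pm\infty$ and $\chi$ has a unique local minimum. *)

theory Defs
  imports "HOL-Analysis.Analysis"
begin

definition is_local_min :: "(real \<Rightarrow> real) \<Rightarrow> real \<Rightarrow> bool" where
  "is_local_min f x \<longleftrightarrow> (\<exists>e>0. \<forall>y. \<bar>y - x\<bar> < e \<longrightarrow> f x \<le> f y)"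

definition is_local_max :: "(real \<Rightarrow> real) \<Rightarrow> real \<Rightarrow> bool" where
  "is_local_max f x \<longleftrightarrow> (\<exists>e>0. \<forall>y. \<bar>y - x\<bar> < e \<longrightarrow> f y \<le> f x)"

end

theory Submission
  imports Defs
begin

text \<open>
  For \<open>0 < \<theta> < pi\<close> we have \<open>chi' t = sin \<theta> * (\<psi>' t + cot \<theta>)\<close>. Hence \<open>chi\<close> tends to
  \<open>+\<infinity>\<close> at both ends and has a unique local minimum as soon as \<open>\<psi>'\<close> crosses the level
  \<open>- cot \<theta>\<close> exactly once, from below. Beyond its last local extremum \<open>\<psi>'\<close> is strictly
  increasing (a continuous function taking the same value twice has an extremum in between), so
  it crosses every sufficiently high level exactly once; reflecting \<open>t \<mapsto> - \<psi>' (- t)\<close> gives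
  the same for all sufficiently low levels. Since \<open>- cot \<theta>\<close> tends to \<open>-\<infinity>\<close> as \<open>\<theta> \<rightarrow> 0\<close>
  and to \<open>+\<infinity>\<close> as \<open>\<theta> \<rightarrow> pi\<close>, every \<open>\<theta>\<close> close enough to \<open>0\<close> or \<open>pi\<close> works.
\<close>

lemma local_extremum_between_equal_values:
  fixes g :: "real \<Rightarrow> real"
  assumes "a < b" and cont: "continuous_on {a..b} g" and "g a = g b"
  shows "\<exists>x\<in>{a<..<b}. is_local_min g x \<or> is_local_max g x"
proof -
  have interior: "is_local_min g x" if "x \<in> {a<..<b}" "\<forall>y\<in>{a..b}. g x \<le> g y" for x
    unfolding is_local_min_def
    by (rule exI[of _ "min (x - a) (b - x)"]) (use that in \<open>auto simp: abs_less_iff\<close>)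
  have interior': "is_local_max g x" if "x \<in> {a<..<b}" "\<forall>y\<in>{a..b}. g y \<le> g x" for x
    unfolding is_local_max_def
    by (rule exI[of _ "min (x - a) (b - x)"]) (use that in \<open>auto simp: abs_less_iff\<close>)
  obtain x where x: "x \<in> {a..b}" "\<forall>y\<in>{a..b}. g y \<le> g x"
    using continuous_attains_sup[OF compact_Icc _ cont] \<open>a < b\<close> by auto
  obtain y where y: "y \<in> {a..b}" "\<forall>z\<in>{a..b}. g y \<le> g z"
    using continuous_attains_inf[OF compact_Icc _ cont] \<open>a < b\<close> by auto
  show ?thesis
  proof (cases "x \<in> {a<..<b} \<or> y \<in> {a<..<b}")
    case True
    then show ?thesis using interior interior' x y by blast
  next
    case False
    \<comment> \<open>max and min are attained at the endpoints, so \<open>g\<close> is constant on \<open>[a, b]\<close>\<close>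
    with x y \<open>g a = g b\<close> have "g x = g a" "g y = g a"
      by (auto simp: less_le)
    define m where "m = (a + b) / 2"
    have m: "m \<in> {a<..<b}" using \<open>a < b\<close> by (simp add: m_def)
    have "g z \<le> g m" if "z \<in> {a..b}" for z
    proof -
      have "g z \<le> g x" using x(2) that by blast
      also have "\<dots> = g y" using \<open>g x = g a\<close> \<open>g y = g a\<close> by simp
      also have "\<dots> \<le> g m" using y(2) m by simp
      finally show ?thesis .
    qed
    then have "is_local_max g m" using m by (intro interior') auto
    then show ?thesis using m by blast
  qed
qed

lemma strict_mono_on_beyond_local_extrema:
  fixes g :: "real \<Rightarrow> real"
  assumes cont: "continuous_on UNIV g" and top: "filterlim g at_top at_top"
    and extrema_below: "\<And>x. is_local_min g x \<or> is_local_max g x \<Longrightarrow> x < R"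
  shows "strict_mono_on {R..} g"
proof (rule strict_mono_onI)
  have cont_on: "continuous_on A g" for A
    using continuous_on_subset[OF cont] by blast
  fix a b assume "a \<in> {R..}" "b \<in> {R..}" "a < b"
  show "g a < g b"
  proof (rule ccontr)
    assume "\<not> g a < g b"
    \<comment> \<open>then \<open>g\<close> returns to the value \<open>g a\<close> somewhere right of \<open>b\<close>\<close>
    have "eventually (\<lambda>t. g a \<le> g t) at_top"
      using top by (simp add: filterlim_at_top)
    then obtain N where "\<And>t. N \<le> t \<Longrightarrow> g a \<le> g t"
      by (auto simp: eventually_at_top_linorder)
    then have "b \<le> max N b" "g a \<le> g (max N b)" by auto
    then obtain x where "b \<le> x" "g x = g a"
      using IVT'[of g b "g a" "max N b", OF _ _ _ cont_on] \<open>\<not> g a < g b\<close> by auto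
    then obtain y where "y \<in> {a<..<x}" "is_local_min g y \<or> is_local_max g y"
      using local_extremum_between_equal_values[of a x g, OF _ cont_on] \<open>a < b\<close> by auto
    then show False using extrema_below[of y] \<open>a \<in> {R..}\<close> by auto
  qed
qed

definition crosses_upward :: "(real \<Rightarrow> real) \<Rightarrow> real \<Rightarrow> bool" where
  "crosses_upward g c \<longleftrightarrow> (\<exists>t0. (\<forall>t<t0. g t < c) \<and> (\<forall>t>t0. c < g t))"

lemma eventually_crosses_upward_at_top:
  fixes g :: "real \<Rightarrow> real"
  assumes cont: "continuous_on UNIV g"
    and bot: "filterlim g at_bot at_bot" and top: "filterlim g at_top at_top"
    and fin: "finite {t. is_local_min g t \<or> is_local_max g t}"
  shows "eventually (crosses_upward g) at_top"
proof -
  have cont_on: "continuous_on A g" for A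
    using continuous_on_subset[OF cont] by blast
  obtain R where "\<And>x. is_local_min g x \<or> is_local_max g x \<Longrightarrow> x < R"
  proof -
    obtain M where "\<And>x. is_local_min g x \<or> is_local_max g x \<Longrightarrow> x \<le> M"
      using bdd_above_finite[OF fin] unfolding bdd_above_def by blast
    then show thesis by (intro that[of "M + 1"]) fastforce
  qed
  then have mono: "strict_mono_on {R..} g"
    by (rule strict_mono_on_beyond_local_extrema[OF cont top])
  obtain C where C: "\<And>t. t \<le> R \<Longrightarrow> g t \<le> C"
  proof -
    have "eventually (\<lambda>t. g t \<le> 0) at_bot"
      using bot by (simp add: filterlim_at_bot)
    then obtain T where T: "\<And>t. t \<le> T \<Longrightarrow> g t \<le> 0"
      by (auto simp: eventually_at_bot_linorder)
    have "{min T R..R} \<noteq> {}" by simp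
    then obtain s where s: "\<And>t. t \<in> {min T R..R} \<Longrightarrow> g t \<le> g s"
      using continuous_attains_sup[OF compact_Icc _ cont_on] by blast
    show thesis
    proof (rule that[of "max 0 (g s)"])
      fix t assume "t \<le> R"
      show "g t \<le> max 0 (g s)"
      proof (cases "t \<le> T")
        case True
        then show ?thesis using T[of t] by simp
      next
        case False
        then show ?thesis using s[of t] \<open>t \<le> R\<close> by simp
      qed
    qed
  qed
  show ?thesis
  proof (rule eventually_at_top_linorderI)
    fix c assume "C + 1 \<le> c"
    have "eventually (\<lambda>t. c \<le> g t) at_top"
      using top by (simp add: filterlim_at_top)
    then obtain N where "\<And>t. N \<le> t \<Longrightarrow> c \<le> g t"
      by (auto simp: eventually_at_top_linorder)
    moreover have "g R \<le> c" using C[of R] \<open>C + 1 \<le> c\<close> by simp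
    ultimately obtain t0 where t0: "R \<le> t0" "g t0 = c"
      using IVT'[of g R c "max N R", OF _ _ _ cont_on] by auto
    show "crosses_upward g c"
      unfolding crosses_upward_def
    proof (intro exI[of _ t0] conjI allI impI)
      fix t assume "t < t0"
      then show "g t < c"
        using C[of t] \<open>C + 1 \<le> c\<close> strict_mono_onD[OF mono, of t t0] t0
        by (cases "t \<le> R") auto
    next
      fix t assume "t0 < t"
      then show "c < g t"
        using strict_mono_onD[OF mono, of t0 t] t0 by auto
    qed
  qed
qed

lemma is_local_min_mirror: "is_local_min (\<lambda>t. - g (- t)) x \<longleftrightarrow> is_local_max g (- x)"
proof -
  have "\<bar>- y - x\<bar> = \<bar>y - - x\<bar>" for y :: real by linarith
  then show ?thesis
    unfolding is_local_min_def is_local_max_def by (metis neg_le_iff_le minus_minus)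
qed

lemma is_local_max_mirror: "is_local_max (\<lambda>t. - g (- t)) x \<longleftrightarrow> is_local_min g (- x)"
proof -
  have "\<bar>- y - x\<bar> = \<bar>y - - x\<bar>" for y :: real by linarith
  then show ?thesis
    unfolding is_local_min_def is_local_max_def by (metis neg_le_iff_le minus_minus)
qed

lemma crosses_upward_mirror:
  assumes "crosses_upward (\<lambda>t. - g (- t)) (- c)"
  shows "crosses_upward g c"
proof -
  obtain t0 where "\<forall>t<t0. - g (- t) < - c" "\<forall>t>t0. - c < - g (- t)"
    using assms unfolding crosses_upward_def by blast
  then have "\<forall>t< - t0. g t < c" "\<forall>t> - t0. c < g t"
    by (metis minus_less_iff neg_less_iff_less minus_minus)+
  then show ?thesis unfolding crosses_upward_def by blast
qed

lemma eventually_crosses_upward_at_bot: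
  fixes g :: "real \<Rightarrow> real"
  assumes cont: "continuous_on UNIV g"
    and bot: "filterlim g at_bot at_bot" and top: "filterlim g at_top at_top"
    and fin: "finite {t. is_local_min g t \<or> is_local_max g t}"
  shows "eventually (crosses_upward g) at_bot"
proof -
  define h where "h t = - g (- t)" for t
  have "continuous_on UNIV h"
    unfolding h_def by (intro continuous_intros continuous_on_compose2[OF cont]) auto
  moreover have "filterlim h at_bot at_bot"
    using top unfolding h_def filterlim_at_bot_mirror filterlim_uminus_at_top by simp
  moreover have "filterlim h at_top at_top"
    using bot unfolding h_def filterlim_at_bot_mirror filterlim_uminus_at_bot by simp
  moreover have "{t. is_local_min h t \<or> is_local_max h t}
      = uminus ` {t. is_local_min g t \<or> is_local_max g t}"
    unfolding h_def is_local_min_mirror is_local_max_mirror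
    by (auto intro: image_eqI[of _ uminus "- _"])
  then have "finite {t. is_local_min h t \<or> is_local_max h t}"
    using fin by simp
  ultimately have "eventually (crosses_upward h) at_top"
    by (rule eventually_crosses_upward_at_top)
  then have "eventually (\<lambda>c. crosses_upward h (- c)) at_bot"
    unfolding at_bot_mirror eventually_filtermap by simp
  then show ?thesis
    unfolding h_def by (auto elim: eventually_mono intro: crosses_upward_mirror)
qed

lemma unique_local_min_of_deriv_sign_change:
  fixes f f' :: "real \<Rightarrow> real"
  assumes deriv: "\<And>t. (f has_real_derivative f' t) (at t)"
    and neg: "\<And>t. t < t0 \<Longrightarrow> f' t < 0" and pos: "\<And>t. t0 < t \<Longrightarrow> 0 < f' t"
  shows "\<exists>!t. is_local_min f t"
proof -
  have cont: "continuous_on A f" for A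
    by (intro continuous_at_imp_continuous_on ballI DERIV_isCont[OF deriv])
  have decreasing: "f b < f a" if "a < b" "b \<le> t0" for a b
    using DERIV_neg_imp_decreasing_open[OF \<open>a < b\<close> _ cont] deriv neg that by force
  have increasing: "f a < f b" if "a < b" "t0 \<le> a" for a b
    using DERIV_pos_imp_increasing_open[OF \<open>a < b\<close> _ cont] deriv pos that by force
  have "f t0 \<le> f y" for y
    using decreasing[of y t0] increasing[of t0 y] by (cases y t0 rule: linorder_cases) auto
  then have "is_local_min f t0"
    unfolding is_local_min_def by (auto intro: exI[of _ 1])
  moreover have "t = t0" if min_t: "is_local_min f t" for t
  proof (rule ccontr)
    assume "t \<noteq> t0"
    obtain e where "e > 0" and e: "\<And>y. \<bar>y - t\<bar> < e \<Longrightarrow> f t \<le> f y"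
      using min_t unfolding is_local_min_def by blast
    \<comment> \<open>move from \<open>t\<close> towards \<open>t0\<close>, where \<open>f\<close> strictly decreases\<close>
    define y where "y = t + sgn (t0 - t) * min e \<bar>t0 - t\<bar> / 2"
    have "\<bar>y - t\<bar> < e" using \<open>e > 0\<close> \<open>t \<noteq> t0\<close>
      by (auto simp: y_def abs_mult abs_sgn_eq)
    moreover have "f y < f t"
    proof (cases "t < t0")
      case True
      then have "t < y" "y \<le> t0" using \<open>e > 0\<close> by (auto simp: y_def min_def field_simps)
      then show ?thesis by (rule decreasing)
    next
      case False
      then have "y < t" "t0 \<le> y" using \<open>e > 0\<close> \<open>t \<noteq> t0\<close> by (auto simp: y_def min_def field_simps)
      then show ?thesis by (rule increasing)
    qed
    ultimately show False using e by fastforce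
  qed
  ultimately show ?thesis by blast
qed

lemma filterlim_at_top_of_deriv_at_top:
  fixes f f' :: "real \<Rightarrow> real"
  assumes deriv: "\<And>t. (f has_real_derivative f' t) (at t)"
    and lim: "filterlim f' at_top at_top"
  shows "filterlim f at_top at_top"
proof -
  have "eventually (\<lambda>t. 1 \<le> f' t) at_top"
    using lim by (simp add: filterlim_at_top)
  then obtain T where T: "\<And>t. T \<le> t \<Longrightarrow> 1 \<le> f' t"
    by (auto simp: eventually_at_top_linorder)
  \<comment> \<open>as \<open>f' \<ge> 1\<close> there, \<open>f t - t\<close> is nondecreasing on \<open>[T, \<infinity>)\<close>\<close>
  have "f T - T + t \<le> f t" if "T \<le> t" for t
  proof -
    have "((\<lambda>t. f t - t) has_real_derivative f' x - 1) (at x)" for x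
      by (rule DERIV_diff[OF deriv DERIV_ident])
    then have "f T - T \<le> f t - t"
      using DERIV_nonneg_imp_nondecreasing[OF that] T by force
    then show ?thesis by simp
  qed
  moreover have "filterlim (\<lambda>t. f T - T + t) at_top at_top"
    by (rule filterlim_tendsto_add_at_top[OF tendsto_const filterlim_ident])
  ultimately show ?thesis
    by (auto intro: filterlim_at_top_mono eventually_at_top_linorderI)
qed

lemma filterlim_at_top_at_bot_of_deriv_at_bot:
  fixes f f' :: "real \<Rightarrow> real"
  assumes deriv: "\<And>t. (f has_real_derivative f' t) (at t)"
    and lim: "filterlim f' at_bot at_bot"
  shows "filterlim f at_top at_bot"
proof -
  have "((\<lambda>t. f (- t)) has_real_derivative - f' (- t)) (at t)" for t
    using deriv DERIV_mirror by blast
  moreover have "filterlim (\<lambda>t. - f' (- t)) at_top at_top"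
    using lim unfolding filterlim_at_bot_mirror filterlim_uminus_at_top by simp
  ultimately have "filterlim (\<lambda>t. f (- t)) at_top at_top"
    by (rule filterlim_at_top_of_deriv_at_top)
  then show ?thesis
    unfolding filterlim_at_bot_mirror .
qed

lemma valley_of_crosses_upward:
  fixes \<psi> \<psi>' :: "real \<Rightarrow> real" and s c :: real
  assumes deriv: "\<And>t. (\<psi> has_real_derivative \<psi>' t) (at t)"
    and bot: "filterlim \<psi>' at_bot at_bot" and top: "filterlim \<psi>' at_top at_top"
    and "0 < s" and "crosses_upward \<psi>' (- c)"
  defines "chi \<equiv> \<lambda>t. s * (\<psi> t + c * t)"
  shows "filterlim chi at_top at_top \<and> filterlim chi at_top at_bot \<and> (\<exists>!t. is_local_min chi t)"
proof -
  have deriv_chi: "(chi has_real_derivative s * (\<psi>' t + c)) (at t)" for t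
    unfolding chi_def using deriv by (auto intro!: derivative_eq_intros)
  obtain t0 where "\<And>t. t < t0 \<Longrightarrow> \<psi>' t + c < 0" "\<And>t. t0 < t \<Longrightarrow> 0 < \<psi>' t + c"
    using \<open>crosses_upward \<psi>' (- c)\<close> unfolding crosses_upward_def by force
  with \<open>0 < s\<close> have unique_min: "\<exists>!t. is_local_min chi t"
    by (intro unique_local_min_of_deriv_sign_change[OF deriv_chi, of t0])
      (auto intro: mult_pos_pos mult_pos_neg)
  have "filterlim (\<lambda>t. \<psi>' t + c) at_top at_top"
    using filterlim_tendsto_add_at_top[OF tendsto_const top] by (simp add: add.commute)
  then have lim_top: "filterlim chi at_top at_top"
    by (intro filterlim_at_top_of_deriv_at_top[OF deriv_chi]
        filterlim_tendsto_pos_mult_at_top[OF tendsto_const \<open>0 < s\<close>])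
  have "filterlim (\<lambda>t. \<psi>' t + c) at_bot at_bot"
    using filterlim_tendsto_add_at_bot_iff[OF tendsto_const, of c \<psi>' at_bot] bot
    by (simp add: add.commute)
  then have lim_bot: "filterlim chi at_top at_bot"
    by (intro filterlim_at_top_at_bot_of_deriv_at_bot[OF deriv_chi]
        filterlim_tendsto_pos_mult_at_bot[OF tendsto_const \<open>0 < s\<close>])
  show ?thesis using lim_top lim_bot unique_min by blast
qed

lemma filterlim_cot_at_right_0: "filterlim cot at_top (at_right (0::real))"
  unfolding cot_def
proof (rule LIM_at_top_divide)
  show "(cos \<longlongrightarrow> 1) (at_right (0::real))"
    using tendsto_cos[OF tendsto_ident_at, of 0 "{0<..}"] by simp
  show "(sin \<longlongrightarrow> 0) (at_right (0::real))"
    using tendsto_sin[OF tendsto_ident_at, of 0 "{0<..}"] by simp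
  show "eventually (\<lambda>x. 0 < sin x) (at_right (0::real))"
    unfolding eventually_at_right_field by (auto intro!: exI[of _ pi] sin_gt_zero)
qed simp

lemma filterlim_cot_at_left_pi: "filterlim cot at_bot (at_left pi)"
proof -
  have "filterlim (\<lambda>x. - cos x / sin x) at_top (at_left pi)"
  proof (rule LIM_at_top_divide)
    show "((\<lambda>x. - cos x) \<longlongrightarrow> 1) (at_left pi)"
      using tendsto_minus[OF tendsto_cos[OF tendsto_ident_at, of pi "{..<pi}"]] by simp
    show "(sin \<longlongrightarrow> 0) (at_left pi)"
      using tendsto_sin[OF tendsto_ident_at, of pi "{..<pi}"] by simp
    show "eventually (\<lambda>x. 0 < sin x) (at_left pi)"
      unfolding eventually_at_left_field by (auto intro!: exI[of _ 0] sin_gt_zero)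
  qed simp
  then show ?thesis
    unfolding cot_def filterlim_uminus_at_bot by simp
qed

theorem lemma3p2:
  fixes \<psi> \<psi>' :: "real \<Rightarrow> real"
  assumes deriv: "\<And>t. (\<psi> has_real_derivative \<psi>' t) (at t)"
    and cont: "continuous_on UNIV \<psi>'"
    and lim_bot: "filterlim \<psi>' at_bot at_bot"
    and lim_top: "filterlim \<psi>' at_top at_top"
    and fin: "finite {t. is_local_min \<psi>' t \<or> is_local_max \<psi>' t}"
  shows "\<exists>\<theta>0 \<theta>1. 0 < \<theta>0 \<and> \<theta>0 < \<theta>1 \<and> \<theta>1 < pi \<and>
           (\<forall>\<theta>\<in>{0<..<pi} - {\<theta>0<..<\<theta>1}.
              let chi = (\<lambda>t. \<psi> t * sin \<theta> + t * cos \<theta>) in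
                filterlim chi at_top at_top \<and> filterlim chi at_top at_bot \<and>
                (\<exists>!t. is_local_min chi t))"
proof -
  define good where "good \<theta> \<longleftrightarrow> crosses_upward \<psi>' (- cot \<theta>)" for \<theta>
  have "eventually good (at_right 0)"
    using eventually_compose_filterlim[OF eventually_crosses_upward_at_bot[OF cont lim_bot lim_top fin]]
      filterlim_cot_at_right_0
    unfolding good_def filterlim_uminus_at_top by blast
  then obtain b0 where "b0 > 0" and b0: "\<And>\<theta>. 0 < \<theta> \<Longrightarrow> \<theta> < b0 \<Longrightarrow> good \<theta>"
    unfolding eventually_at_right_field by auto
  have "eventually good (at_left pi)"
    using eventually_compose_filterlim[OF eventually_crosses_upward_at_top[OF cont lim_bot lim_top fin]]
      filterlim_cot_at_left_pi
    unfolding good_def filterlim_uminus_at_bot by blast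
  then obtain b1 where "b1 < pi" and b1: "\<And>\<theta>. b1 < \<theta> \<Longrightarrow> \<theta> < pi \<Longrightarrow> good \<theta>"
    unfolding eventually_at_left_field by auto
  define \<theta>0 where "\<theta>0 = min (b0 / 2) 1"
  define \<theta>1 where "\<theta>1 = max ((b1 + pi) / 2) 2"
  have "0 < \<theta>0" "\<theta>0 < \<theta>1" "\<theta>1 < pi"
    using \<open>b0 > 0\<close> \<open>b1 < pi\<close> pi_gt3 by (auto simp: \<theta>0_def \<theta>1_def)
  moreover have "good \<theta>" if "\<theta> \<in> {0<..<pi} - {\<theta>0<..<\<theta>1}" for \<theta>
  proof -
    have "\<theta>0 < b0" "b1 < \<theta>1"
      using \<open>b0 > 0\<close> \<open>b1 < pi\<close> by (auto simp: \<theta>0_def \<theta>1_def less_max_iff_disj)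
    then show ?thesis
      using that b0[of \<theta>] b1[of \<theta>] by force
  qed
  moreover have "let chi = (\<lambda>t. \<psi> t * sin \<theta> + t * cos \<theta>) in
      filterlim chi at_top at_top \<and> filterlim chi at_top at_bot \<and> (\<exists>!t. is_local_min chi t)"
    if "\<theta> \<in> {0<..<pi}" and "good \<theta>" for \<theta>
  proof -
    have "0 < sin \<theta>" using that by (auto intro: sin_gt_zero)
    then have chi: "(\<lambda>t. \<psi> t * sin \<theta> + t * cos \<theta>) = (\<lambda>t. sin \<theta> * (\<psi> t + cot \<theta> * t))"
      by (auto simp: cot_def field_simps)
    show ?thesis
      unfolding Let_def chi
      using valley_of_crosses_upward[OF deriv lim_bot lim_top \<open>0 < sin \<theta>\<close>] \<open>good \<theta>\<close>
      unfolding good_def by blast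
  qed
  ultimately show ?thesis by blast
qed

end
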